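(* Let $r\ge 1$ and $n\ge 3r+6$ be integers. Then $\rho(K_{3,n-3})>\rho(H'_{n,r})$.
   Context: $\rho$ denotes the spectral radius (largest adjacency eigenvalue). $K_1\vee rK_3$ is the join of a single vertex with $r$ disjoint triangles; let $u$ be its vertex of degree $3r$ (any vertex if $r=1$). In $K_{3,n-3r-3}$ (complete bipartite with parts of sizes $3$ and $n-3r-3$), let $vw$ be an edge where $v$ has degree $n-3r-3$ and $w$ has degree $3$. $H'_{n,r}$ is the graph obtained from the disjoint union of $K_1\vee rK_3$ and $K_{3,n-3r-3}$ by identifying $u$ with $w$. *)

theory Defs
  imports "Jordan_Normal_Form.Char_Poly"
begin

text \<open>Simple graphs on vertex set {0..<n}, given by a symmetric irreflexive edge predicate.\<close>

definition adj_mat :: "nat \<Rightarrow> (nat \<Rightarrow> nat \<Rightarrow> bool) \<Rightarrow> real mat" where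
  "adj_mat n E = mat n n (\<lambda>(i,j). if E i j then 1 else 0)"

definition spec_rad :: "nat \<Rightarrow> (nat \<Rightarrow> nat \<Rightarrow> bool) \<Rightarrow> real" where
  "spec_rad n E = Max {k. eigenvalue (adj_mat n E) k}"

definition K3_edges :: "nat \<Rightarrow> nat \<Rightarrow> bool" where
  "K3_edges i j = ((i < 3 \<and> 3 \<le> j) \<or> (j < 3 \<and> 3 \<le> i))"

text \<open>H'_{n,r} on {0..<n}: vertex 0 is u = w; triangles {3k+1,3k+2,3k+3} (k<r);
  the part of size 3 of K_{3,n-3r-3} is {3r+1,3r+2,3r+3}; the other part is {0} \<union> {3r+4..<n}.\<close>
definition H'_edges :: "nat \<Rightarrow> nat \<Rightarrow> nat \<Rightarrow> bool" where
  "H'_edges r i j =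
     ((1 \<le> i \<and> i \<le> 3*r \<and> 1 \<le> j \<and> j \<le> 3*r \<and> i \<noteq> j \<and> (i - 1) div 3 = (j - 1) div 3)
      \<or> (i = 0 \<and> 1 \<le> j \<and> j \<le> 3*r) \<or> (j = 0 \<and> 1 \<le> i \<and> i \<le> 3*r)
      \<or> (3*r+1 \<le> i \<and> i \<le> 3*r+3 \<and> (j = 0 \<or> 3*r+4 \<le> j))
      \<or> (3*r+1 \<le> j \<and> j \<le> 3*r+3 \<and> (i = 0 \<or> 3*r+4 \<le> i)))"

end

theory Submission
  imports Defs "Jordan_Normal_Form.Spectral_Radius"
begin

(* With L = sqrt (3 (n - 3)), the vector equal to L/3 on the part of size 3 and to 1 on the other
   part is an eigenvector of K_{3,n-3} for L, so rho(K_{3,n-3}) >= L.  For H'_{n,r} one exhibits a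
   positive vector x, constant on the classes {u}, triangle vertices, the part of size 3 and the rest
   of K_{3,n-3r-3}, with A x < L x componentwise.  Evaluating an eigenvector v at a coordinate
   maximising |v_i| / x_i (the Collatz-Wielandt argument) then puts every real eigenvalue of
   H'_{n,r} strictly below L. *)

definition nbhd :: "nat \<Rightarrow> (nat \<Rightarrow> nat \<Rightarrow> bool) \<Rightarrow> nat \<Rightarrow> nat set" where
  "nbhd n E i = {j. j < n \<and> E i j}"

lemma adj_mat_carrier [simp]: "adj_mat n E \<in> carrier_mat n n"
  by (simp add: adj_mat_def)

lemma dim_adj_mat [simp]: "dim_row (adj_mat n E) = n" "dim_col (adj_mat n E) = n"
  by (simp_all add: adj_mat_def)

lemma finite_nbhd [simp]: "finite (nbhd n E i)"
  by (simp add: nbhd_def)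

lemma adj_mat_mult_vec_index:
  assumes "i < n"
  shows "(adj_mat n E *\<^sub>v vec n x) $ i = (\<Sum>j\<in>nbhd n E i. x j)"
proof -
  have "(adj_mat n E *\<^sub>v vec n x) $ i = (\<Sum>j<n. if E i j then x j else 0)"
    using assms by (auto simp: adj_mat_def scalar_prod_def lessThan_atLeast0 intro!: sum.cong)
  also have "\<dots> = (\<Sum>j\<in>nbhd n E i. x j)"
    by (simp add: nbhd_def sum.If_cases Collect_conj_eq lessThan_def Int_commute)
  finally show ?thesis .
qed

lemma adj_mat_eigenvalueI:
  assumes "j < n" "x j \<noteq> 0"
    and "\<And>i. i < n \<Longrightarrow> (\<Sum>j\<in>nbhd n E i. x j) = k * x i"
  shows "eigenvalue (adj_mat n E) k"
proof -
  have "vec n x \<noteq> 0\<^sub>v n"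
    using assms(1,2) by (metis index_vec index_zero_vec(1))
  moreover have "adj_mat n E *\<^sub>v vec n x = k \<cdot>\<^sub>v vec n x"
    using adj_mat_mult_vec_index assms(3) by (intro eq_vecI) simp_all
  ultimately show ?thesis
    unfolding eigenvalue_def eigenvector_def by (intro exI[of _ "vec n x"]) simp
qed

lemma eigenvalue_zero_if_twins:
  assumes "p < n" "q < n" "p \<noteq> q" "\<And>i. i < n \<Longrightarrow> E i p = E i q"
  shows "eigenvalue (adj_mat n E) 0"
proof (rule adj_mat_eigenvalueI[where j = p and x = "\<lambda>j. of_bool (j = p) - of_bool (j = q)"])
  fix i assume "i < n"
  then have "p \<in> nbhd n E i \<longleftrightarrow> q \<in> nbhd n E i"
    using assms by (simp add: nbhd_def)
  then show "(\<Sum>j\<in>nbhd n E i. of_bool (j = p) - of_bool (j = q)) = (0::real) * (of_bool (i = p) - of_bool (i = q))"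
    using assms by (simp add: sum_subtractf of_bool_def)
qed (use assms in auto)

lemma abs_eigenvalue_less_if_mult_vec_less:
  fixes A :: "real mat"
  assumes A: "A \<in> carrier_mat n n" and nonneg: "\<And>i j. i < n \<Longrightarrow> j < n \<Longrightarrow> A $$ (i, j) \<ge> 0"
    and x: "x \<in> carrier_vec n" "\<And>i. i < n \<Longrightarrow> x $ i > 0"
    and sub: "\<And>i. i < n \<Longrightarrow> (A *\<^sub>v x) $ i < c * x $ i"
    and "eigenvalue A k"
  shows "\<bar>k\<bar> < c"
proof -
  obtain v where v: "v \<in> carrier_vec n" "v \<noteq> 0\<^sub>v n" "A *\<^sub>v v = k \<cdot>\<^sub>v v"
    using \<open>eigenvalue A k\<close> A unfolding eigenvalue_def eigenvector_def by auto
  have row: "(A *\<^sub>v w) $ i = (\<Sum>j<n. A $$ (i, j) * w $ j)" if "w \<in> carrier_vec n" "i < n" for w i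
    using A that by (auto simp: scalar_prod_def lessThan_atLeast0 intro!: sum.cong)
  define f where "f j = \<bar>v $ j\<bar> / x $ j" for j
  obtain i0 where i0: "i0 < n" "v $ i0 \<noteq> 0"
    using v(1,2) by (metis eq_vecI carrier_vecD index_zero_vec)
  obtain i where i: "i < n" and i_Max: "f i = Max (f ` {..<n})"
    using Max_in[of "f ` {..<n}"] i0(1) by fastforce
  have i_max: "f j \<le> f i" if "j < n" for j
    using that i_Max by simp
  have "f i0 > 0"
    using i0 x(2)[OF i0(1)] by (simp add: f_def)
  then have "f i > 0"
    using i_max[OF i0(1)] by linarith
  have v_le: "\<bar>v $ j\<bar> \<le> f i * x $ j" if "j < n" for j
    using i_max[OF that] x(2)[OF that] by (simp add: f_def divide_le_eq)
  have "\<bar>k\<bar> * \<bar>v $ i\<bar> = \<bar>(A *\<^sub>v v) $ i\<bar>"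
    using v(1,3) i by (simp add: abs_mult)
  also have "\<dots> = \<bar>\<Sum>j<n. A $$ (i, j) * v $ j\<bar>"
    using row[OF v(1) i] by simp
  also have "\<dots> \<le> (\<Sum>j<n. A $$ (i, j) * (f i * x $ j))"
    using nonneg[OF i] v_le by (auto intro!: sum_abs[THEN order_trans] sum_mono simp: abs_mult mult_left_mono)
  also have "\<dots> = f i * (A *\<^sub>v x) $ i"
    by (simp add: row[OF x(1) i] sum_distrib_left algebra_simps)
  also have "\<dots> < f i * (c * x $ i)"
    using sub[OF i] \<open>f i > 0\<close> by simp
  also have "\<dots> = c * \<bar>v $ i\<bar>"
    using x(2)[OF i] by (simp add: f_def)
  finally have "\<bar>k\<bar> * \<bar>v $ i\<bar> < c * \<bar>v $ i\<bar>" .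
  moreover have "\<bar>v $ i\<bar> > 0"
    using \<open>f i > 0\<close> x(2)[OF i] by (simp add: f_def zero_less_divide_iff)
  ultimately show ?thesis
    by (metis mult.commute mult_less_cancel_right_pos)
qed

lemma adj_mat_eigenvalue_less:
  assumes "\<And>i. i < n \<Longrightarrow> x i > 0" "\<And>i. i < n \<Longrightarrow> (\<Sum>j\<in>nbhd n E i. x j) < c * x i"
    and "eigenvalue (adj_mat n E) k"
  shows "k < c"
proof -
  have "\<bar>k\<bar> < c"
    by (rule abs_eigenvalue_less_if_mult_vec_less[where x = "vec n x"])
      (use assms adj_mat_mult_vec_index in \<open>auto simp: adj_mat_def simp del: index_mult_mat_vec\<close>)
  then show ?thesis
    by simp
qed

lemma finite_eigenvalues_adj_mat: "finite {k. eigenvalue (adj_mat n E) k}"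
  using card_finite_spectrum(1)[OF adj_mat_carrier] unfolding spectrum_def .

lemma eigenvalue_le_spec_rad: "eigenvalue (adj_mat n E) k \<Longrightarrow> k \<le> spec_rad n E"
  unfolding spec_rad_def using finite_eigenvalues_adj_mat by simp

lemma spec_rad_less:
  assumes "eigenvalue (adj_mat n E) k0" and "\<And>k. eigenvalue (adj_mat n E) k \<Longrightarrow> k < c"
  shows "spec_rad n E < c"
  unfolding spec_rad_def using assms finite_eigenvalues_adj_mat by (subst Max_less_iff) auto

lemma nbhd_K3_edges:
  "i < 3 \<Longrightarrow> nbhd n K3_edges i = {3..<n}"
  "3 \<le> i \<Longrightarrow> 3 \<le> n \<Longrightarrow> nbhd n K3_edges i = {0, 1, 2}"
  by (auto simp: nbhd_def K3_edges_def)

lemma eigenvalue_K3_edges: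
  assumes "n \<ge> 4"
  shows "eigenvalue (adj_mat n K3_edges) (sqrt (3 * (real n - 3)))"
proof -
  define L where "L = sqrt (3 * (real n - 3))"
  have "L * L = 3 * (real n - 3)"
    using assms unfolding L_def by simp
  have "eigenvalue (adj_mat n K3_edges) L"
  proof (rule adj_mat_eigenvalueI[where j = 3 and x = "\<lambda>j. if j < 3 then L / 3 else 1"])
    fix i assume "i < n"
    have "(\<Sum>j\<in>{3..<n}. if j < 3 then L / 3 else 1) = real n - 3"
      using assms by simp
    then show "(\<Sum>j\<in>nbhd n K3_edges i. if j < 3 then L / 3 else 1) = L * (if i < 3 then L / 3 else 1)"
      using assms \<open>L * L = 3 * (real n - 3)\<close> by (cases "i < 3") (simp_all add: nbhd_K3_edges)
  qed (use assms in auto)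
  then show ?thesis
    unfolding L_def .
qed

lemma nbhd_H'_edges_centre:
  "3 * r + 3 < n \<Longrightarrow> nbhd n (H'_edges r) 0 = {1..3 * r} \<union> {3 * r + 1..3 * r + 3}"
  by (auto simp: nbhd_def H'_edges_def)

lemma nbhd_H'_edges_triangle:
  assumes "q < r" "3 * q < i" "i \<le> 3 * q + 3" "3 * r < n"
  shows "nbhd n (H'_edges r) i = insert 0 ({3 * q + 1..3 * q + 3} - {i})"
proof -
  have block: "(j - 1) div 3 = q \<longleftrightarrow> 3 * q < j \<and> j \<le> 3 * q + 3" if "1 \<le> j" for j
    using that by auto
  have "(i - 1) div 3 = q"
    using assms block[of i] by simp
  have "H'_edges r i j \<longleftrightarrow> j = 0 \<or> j \<in> {3 * q + 1..3 * q + 3} - {i}" for j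
  proof -
    have "H'_edges r i j \<longleftrightarrow> j = 0 \<or> (1 \<le> j \<and> j \<le> 3 * r \<and> j \<noteq> i \<and> (j - 1) div 3 = q)"
      using assms \<open>(i - 1) div 3 = q\<close> unfolding H'_edges_def by auto
    also have "\<dots> \<longleftrightarrow> j = 0 \<or> j \<in> {3 * q + 1..3 * q + 3} - {i}"
      using assms block[of j] by auto
    finally show ?thesis .
  qed
  then show ?thesis
    using assms unfolding nbhd_def by auto
qed

lemma nbhd_H'_edges_small_part:
  "3 * r < i \<Longrightarrow> i \<le> 3 * r + 3 \<Longrightarrow> i < n \<Longrightarrow> nbhd n (H'_edges r) i = insert 0 {3 * r + 4..<n}"
  by (auto simp: nbhd_def H'_edges_def)

lemma nbhd_H'_edges_large_part:
  "3 * r + 3 < i \<Longrightarrow> i < n \<Longrightarrow> nbhd n (H'_edges r) i = {3 * r + 1..3 * r + 3}"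
  by (auto simp: nbhd_def H'_edges_def)

definition H'_weight :: "nat \<Rightarrow> real \<Rightarrow> real \<Rightarrow> real \<Rightarrow> nat \<Rightarrow> real" where
  "H'_weight r a c d j = (if j = 0 then 1 else if j \<le> 3 * r then a else if j \<le> 3 * r + 3 then c else d)"

text \<open>The partition into \<open>{u}\<close>, the triangle vertices and the two parts of \<open>K_{3,n-3r-3}\<close> is
  equitable; the right-hand side lists the row sums of its quotient matrix.\<close>

lemma sum_nbhd_H'_weight:
  assumes "3 * r + 3 < n" "i < n"
  shows "(\<Sum>j\<in>nbhd n (H'_edges r) i. H'_weight r a c d j) =
    (if i = 0 then 3 * r * a + 3 * c
     else if i \<le> 3 * r then 1 + 2 * a
     else if i \<le> 3 * r + 3 then 1 + (real n - 3 * r - 4) * d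
     else 3 * c)"
proof -
  consider "i = 0" | "1 \<le> i" "i \<le> 3 * r" | "3 * r < i" "i \<le> 3 * r + 3" | "3 * r + 3 < i"
    by linarith
  then show ?thesis
  proof cases
    case 1
    have "(\<Sum>j\<in>{1..3 * r} \<union> {3 * r + 1..3 * r + 3}. H'_weight r a c d j) =
        (\<Sum>j\<in>{1..3 * r}. H'_weight r a c d j) + (\<Sum>j\<in>{3 * r + 1..3 * r + 3}. H'_weight r a c d j)"
      by (rule sum.union_disjoint) auto
    then show ?thesis
      using 1 assms by (simp add: nbhd_H'_edges_centre H'_weight_def)
  next
    case 2
    define q where "q = (i - 1) div 3"
    have q: "q < r" "3 * q < i" "i \<le> 3 * q + 3"
      using 2 unfolding q_def by auto
    have "card ({3 * q + 1..3 * q + 3} - {i}) = 2"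
      using q by (simp add: card_Diff_singleton)
    moreover have "(\<Sum>j\<in>{3 * q + 1..3 * q + 3} - {i}. H'_weight r a c d j) =
        (\<Sum>j\<in>{3 * q + 1..3 * q + 3} - {i}. a)"
      using q by (intro sum.cong) (auto simp: H'_weight_def)
    ultimately show ?thesis
      using 2 q assms by (simp add: nbhd_H'_edges_triangle H'_weight_def)
  next
    case 3
    then show ?thesis
      using assms by (simp add: nbhd_H'_edges_small_part H'_weight_def)
  next
    case 4
    then show ?thesis
      using assms by (simp add: nbhd_H'_edges_large_part H'_weight_def)
  qed
qed

lemma eigenvalue_H'_edges_less:
  assumes "r \<ge> 1" "n \<ge> 3 * r + 6" "eigenvalue (adj_mat n (H'_edges r)) k"
  shows "k < sqrt (3 * (real n - 3))"
proof -
  define m where "m = real n - 3 * r - 3"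
  define L where "L = sqrt (3 * (real n - 3))"
  have m: "m \<ge> 3" and r: "real r \<ge> 1"
    using assms unfolding m_def by auto
  have L_sq: "L\<^sup>2 = 3 * m + 9 * r"
    using assms unfolding L_def m_def by simp
  have L_gt: "3 < L"
    unfolding L_def using assms by (intro real_less_rsqrt) simp
  have L_lt: "L < m + 3 / 2 * r"
  proof -
    have "3 * m \<le> m * m" "3 * r \<le> m * r" "0 < r * r"
      using m r by (simp_all add: mult_right_mono)
    moreover have "(m + 3 / 2 * r)\<^sup>2 = m * m + 3 * (m * r) + 9 / 4 * (r * r)"
      by (simp add: power2_eq_square algebra_simps)
    ultimately have "L\<^sup>2 < (m + 3 / 2 * r)\<^sup>2"
      unfolding L_sq by linarith
    then show ?thesis
      by (rule power_less_imp_less_base) (use m r in simp)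
  qed
  \<comment> \<open>\<open>(c, d)\<close> is the Perron vector \<open>(L/3, 1)\<close> of \<open>K_{3,n-3}\<close> scaled by \<open>1/3\<close>, with \<open>d\<close> raised by
    \<open>1/(3m)\<close> to make the rows of the large part strict.\<close>
  define a c d where "a = 1 / (L - 3)" and "c = L / 9" and "d = (m + 1) / (3 * m)"
  show ?thesis
    unfolding L_def[symmetric]
  proof (rule adj_mat_eigenvalue_less[OF _ _ assms(3)])
    fix i assume "i < n"
    have sum_eq: "(\<Sum>j\<in>nbhd n (H'_edges r) i. H'_weight r a c d j) =
      (if i = 0 then 3 * r * a + 3 * c
       else if i \<le> 3 * r then 1 + 2 * a
       else if i \<le> 3 * r + 3 then 1 + (m - 1) * d
       else 3 * c)"
      using assms \<open>i < n\<close> by (simp add: sum_nbhd_H'_weight m_def)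
    consider "i = 0" | "1 \<le> i" "i \<le> 3 * r" | "3 * r < i" "i \<le> 3 * r + 3" | "3 * r + 3 < i"
      by linarith
    then show "(\<Sum>j\<in>nbhd n (H'_edges r) i. H'_weight r a c d j) < L * H'_weight r a c d i"
    proof cases
      case 1
      have "3 * r < 2 / 3 * L * (L - 3)"
        using L_sq L_lt by (simp add: power2_eq_square algebra_simps)
      then have "3 * r * a < 2 / 3 * L"
        using L_gt by (simp add: a_def pos_divide_less_eq)
      then show ?thesis
        unfolding sum_eq using 1 by (simp add: H'_weight_def c_def)
    next
      case 2
      have "1 + 2 * a < L * a"
        using L_gt by (simp add: a_def field_simps)
      then show ?thesis
        unfolding sum_eq using 2 by (simp add: H'_weight_def)
    next
      case 3
      have "1 + (m - 1) * d = 1 + m / 3 - 1 / (3 * m)"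
        using m by (simp add: d_def field_simps)
      also have "\<dots> < m / 3 + r"
        using m r by (smt (verit) divide_pos_pos)
      also have "\<dots> = L * c"
        using L_sq by (simp add: c_def power2_eq_square field_simps)
      finally show ?thesis
        unfolding sum_eq using 3 by (simp add: H'_weight_def)
    next
      case 4
      have "3 * c < L * d"
        using L_gt m by (simp add: c_def d_def field_simps)
      then show ?thesis
        unfolding sum_eq using 4 by (simp add: H'_weight_def)
    qed
  qed (use L_gt m in \<open>simp add: H'_weight_def a_def c_def d_def\<close>)
qed

theorem corollary4p4:
  fixes r n :: nat
  assumes "r \<ge> 1" and "n \<ge> 3*r+6"
  shows "spec_rad n K3_edges > spec_rad n (H'_edges r)"
proof -
  \<comment> \<open>Two twin vertices of the large part make the set maximised in \<open>spec_rad\<close> nonempty.\<close>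
  have "eigenvalue (adj_mat n (H'_edges r)) 0"
    using assms(2) by (intro eigenvalue_zero_if_twins[of "3 * r + 4" n "3 * r + 5"]) (auto simp: H'_edges_def)
  then have "spec_rad n (H'_edges r) < sqrt (3 * (real n - 3))"
    by (rule spec_rad_less) (use assms eigenvalue_H'_edges_less in blast)
  also have "\<dots> \<le> spec_rad n K3_edges"
    using assms by (intro eigenvalue_le_spec_rad eigenvalue_K3_edges) simp
  finally show ?thesis .
qed

end
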